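(* Let $\mathcal{L}$ be a propositional language and let $\mathcal{L}_1$ be an expansion of $\mathcal{L}$, with induced quantale embedding $i:\wp\Sigma_{\mathcal{L}}\to\wp\Sigma_{\mathcal{L}_1}$. Let $(D,\vdash)$ be a deductive system over $\mathcal{L}$ with associated nucleus $\gamma$ and $\wp\Sigma_{\mathcal{L}}$-module of theories $\mathrm{Th}$. Then $\mathrm{Th}$ is isomorphic to a $\wp\Sigma_{\mathcal{L}}$-submodule of $(\wp\Sigma_{\mathcal{L}_1}\otimes_{\wp\Sigma_{\mathcal{L}}}\mathrm{Th})_i$.
   Context: A quantale is a complete lattice $Q$ with a monoid structure $(Q,\cdot,1)$ whose product distributes over arbitrary joins on both sides. A left $Q$-module is a complete lattice $M$ with an action $Q\times M\to M$ that is associative, unital, and distributes over arbitrary joins in both arguments (right modules analogously); module homomorphisms preserve arbitrary joins and the action. A $Q$-module nucleus on $M$ is a closure operator $\gamma$ on $M$ with $a\gamma(u)\le\gamma(au)$; its image $M_\gamma$ is a $Q$-module with joins $\gamma(\bigvee\cdot)$ and action $a\cdot_\gamma u=\gamma(au)$. A propositional language $\mathcal{L}$ is a set of connectives with arities; fix a denumerable set $\mathrm{Var}$ of variables; $\mathit{Fm}_{\mathcal{L}}$ is the absolutely free $\mathcal{L}$-algebra over $\mathrm{Var}$, and $\Sigma_{\mathcal{L}}$ is the monoid (under composition) of its endomorphisms (substitutions). $\wp\Sigma_{\mathcal{L}}$ is the quantale of subsets of $\Sigma_{\mathcal{L}}$ with union as join, product $\Sigma\Sigma'=\{\sigma\sigma'\}$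 and unit $\{\mathrm{id}\}$. The domain $D$ of a deductive system is either $\mathit{Fm}_{\mathcal{L}}$, or $\mathit{Eq}=\mathit{Fm}_{\mathcal{L}}^2$, or $\mathit{Seq}_T=\bigcup_{(m,n)\in T}\mathit{Fm}_{\mathcal{L}}^m\times\mathit{Fm}_{\mathcal{L}}^n$ for some $T\subseteq\omega^2$; $\wp D$ is a left $\wp\Sigma_{\mathcal{L}}$-module with union as join and $\Sigma\cdot\Phi=\{\sigma(\varphi):\sigma\in\Sigma,\varphi\in\Phi\}$ (substitutions acting componentwise). A (structural) consequence relation $\vdash$ on $D$ (given by axioms and inference rules) corresponds to the $\wp\Sigma_{\mathcal{L}}$-module nucleus $\gamma(\Phi)=\{\psi:\Phi\vdash\psi\}$ on $\wp D$; its module of theories is $\mathrm{Th}=(\wp D)_\gamma$. An expansion $\mathcal{L}_1$ of $\mathcal{L}$ is a language containing all connectives of $\mathcal{L}$ with the same arities; $i$ sends $\Sigma\subseteq\Sigma_{\mathcal{L}}$ to the set of the unique $\mathcal{L}_1$-substitutions agreeing on $\mathrm{Var}$ with the elements of $\Sigma$. Via $i$, $\wp\Sigma_{\mathcal{L}_1}$ is a right $\wp\Sigma_{\mathcal{L}}$-module ($\Omega\cdot\Sigma=\Omega\, i(\Sigma)$). For a right $Q$-module $M_1$ and left $Q$-module $M_2$, the tensor product $M_1\otimes_Q M_2$ is the quotient of the free sup-lattice $\wp(M_1\times M_2)$ by the sup-lattice congruence generated by the pairs $(\{(\bigvee X,y)\},\bigcup_{x\in X}\{(x,y)\})$, $(\{(x,\bigvee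 Y)\},\bigcup_{y\in Y}\{(x,y)\})$, $(\{(xa,y)\},\{(x,ay)\})$; here $\wp\Sigma_{\mathcal{L}_1}\otimes_{\wp\Sigma_{\mathcal{L}}}\mathrm{Th}$ is a left $\wp\Sigma_{\mathcal{L}_1}$-module via left multiplication on the first factor. For a $\wp\Sigma_{\mathcal{L}_1}$-module $N$, $(N)_i$ denotes the $\wp\Sigma_{\mathcal{L}}$-module with the same sup-lattice and action $\Sigma\cdot u=i(\Sigma)u$. *)

theory Defs
  imports Main
begin

text \<open>Connective symbols live in a type 'c, each with a fixed arity given by ar.
  A language is a set L of connective symbols (with the arities ar).\<close>

datatype 'c fm = Var nat | Op 'c "'c fm list"

fun wf_fm :: "('c \<Rightarrow> nat) \<Rightarrow> 'c set \<Rightarrow> 'c fm \<Rightarrow> bool" where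
  "wf_fm ar L (Var v) = True"
| "wf_fm ar L (Op c xs) = (c \<in> L \<and> length xs = ar c \<and> (\<forall>x\<in>set xs. wf_fm ar L x))"

definition Fm :: "('c \<Rightarrow> nat) \<Rightarrow> 'c set \<Rightarrow> 'c fm set" where
  "Fm ar L = {x. wf_fm ar L x}"

text \<open>An expansion L1 of L: contains all connectives of L with the same arities.\<close>
definition expansion :: "'c set \<Rightarrow> 'c set \<Rightarrow> bool" where
  "expansion L L1 \<longleftrightarrow> L \<subseteq> L1"

text \<open>An endomorphism of Fm_L is uniquely determined by its values on the variables;
  we represent it by that variable assignment s, acting via subst s.\<close>

fun subst :: "(nat \<Rightarrow> 'c fm) \<Rightarrow> 'c fm \<Rightarrow> 'c fm" where
  "subst s (Var v) = s v"
| "subst s (Op c xs) = Op c (map (subst s) xs)"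

definition Sig :: "('c \<Rightarrow> nat) \<Rightarrow> 'c set \<Rightarrow> (nat \<Rightarrow> 'c fm) set" where
  "Sig ar L = {s. \<forall>v. s v \<in> Fm ar L}"

text \<open>Composition sigma sigma' (first sigma', then sigma).\<close>
definition scomp :: "(nat \<Rightarrow> 'c fm) \<Rightarrow> (nat \<Rightarrow> 'c fm) \<Rightarrow> (nat \<Rightarrow> 'c fm)" where
  "scomp s t = (\<lambda>v. subst s (t v))"

definition sprod :: "(nat \<Rightarrow> 'c fm) set \<Rightarrow> (nat \<Rightarrow> 'c fm) set \<Rightarrow> (nat \<Rightarrow> 'c fm) set" where
  "sprod A B = {scomp s t | s t. s \<in> A \<and> t \<in> B}"

definition iemb :: "('c \<Rightarrow> nat) \<Rightarrow> 'c set \<Rightarrow> (nat \<Rightarrow> 'c fm) set \<Rightarrow> (nat \<Rightarrow> 'c fm) set" where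
  "iemb ar L1 A = {t \<in> Sig ar L1. \<exists>s\<in>A. \<forall>v. t v = s v}"

datatype 'c delt = DF "'c fm" | DE "'c fm" "'c fm" | DS "'c fm list" "'c fm list"

text \<open>Kind of domain: formulas, equations, or sequents of types in T.\<close>
datatype dkind = KFm | KEq | KSeq "(nat \<times> nat) set"

fun Dom :: "('c \<Rightarrow> nat) \<Rightarrow> 'c set \<Rightarrow> dkind \<Rightarrow> 'c delt set" where
  "Dom ar L KFm = DF ` Fm ar L"
| "Dom ar L KEq = {DE a b | a b. a \<in> Fm ar L \<and> b \<in> Fm ar L}"
| "Dom ar L (KSeq T) = {DS xs ys | xs ys. (length xs, length ys) \<in> T
                         \<and> set xs \<subseteq> Fm ar L \<and> set ys \<subseteq> Fm ar L}"

fun app :: "(nat \<Rightarrow> 'c fm) \<Rightarrow> 'c delt \<Rightarrow> 'c delt" where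
  "app s (DF a) = DF (subst s a)"
| "app s (DE a b) = DE (subst s a) (subst s b)"
| "app s (DS xs ys) = DS (map (subst s) xs) (map (subst s) ys)"

definition sact :: "(nat \<Rightarrow> 'c fm) set \<Rightarrow> 'c delt set \<Rightarrow> 'c delt set" where
  "sact A Phi = {app s d | s d. s \<in> A \<and> d \<in> Phi}"

definition conseq_rel :: "('c \<Rightarrow> nat) \<Rightarrow> 'c set \<Rightarrow> dkind \<Rightarrow> ('c delt set \<Rightarrow> 'c delt \<Rightarrow> bool) \<Rightarrow> bool" where
  "conseq_rel ar L K der \<longleftrightarrow>
     (\<forall>Phi psi. der Phi psi \<longrightarrow> Phi \<subseteq> Dom ar L K \<and> psi \<in> Dom ar L K) \<and>
     (\<forall>Phi phi. Phi \<subseteq> Dom ar L K \<and> phi \<in> Phi \<longrightarrow> der Phi phi) \<and>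
     (\<forall>Phi Psi phi. der Phi phi \<and> Phi \<subseteq> Psi \<and> Psi \<subseteq> Dom ar L K \<longrightarrow> der Psi phi) \<and>
     (\<forall>Phi Psi chi. Phi \<subseteq> Dom ar L K \<and> (\<forall>psi\<in>Psi. der Phi psi) \<and> der Psi chi \<longrightarrow> der Phi chi) \<and>
     (\<forall>Phi phi s. der Phi phi \<and> s \<in> Sig ar L \<longrightarrow> der (app s ` Phi) (app s phi))"

definition gamma :: "('c delt set \<Rightarrow> 'c delt \<Rightarrow> bool) \<Rightarrow> 'c delt set \<Rightarrow> 'c delt set" where
  "gamma der Phi = {psi. der Phi psi}"

definition Th :: "('c \<Rightarrow> nat) \<Rightarrow> 'c set \<Rightarrow> dkind \<Rightarrow> ('c delt set \<Rightarrow> 'c delt \<Rightarrow> bool) \<Rightarrow> 'c delt set set" where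
  "Th ar L K der = {Phi. Phi \<subseteq> Dom ar L K \<and> gamma der Phi = Phi}"

definition ThJoin :: "('c delt set \<Rightarrow> 'c delt \<Rightarrow> bool) \<Rightarrow> 'c delt set set \<Rightarrow> 'c delt set" where
  "ThJoin der X = gamma der (\<Union>X)"

definition ThAct :: "('c delt set \<Rightarrow> 'c delt \<Rightarrow> bool) \<Rightarrow> (nat \<Rightarrow> 'c fm) set \<Rightarrow> 'c delt set \<Rightarrow> 'c delt set" where
  "ThAct der A Phi = gamma der (sact A Phi)"

text \<open>Generating pairs of the sup-lattice congruence on the free sup-lattice P(M1 x M2).
  Q: quantale elements; (C1, J1, R1): right module; (C2, J2, A2): left module.\<close>
definition tgen :: "'q set \<Rightarrow> 'a set \<Rightarrow> ('a set \<Rightarrow> 'a) \<Rightarrow> ('a \<Rightarrow> 'q \<Rightarrow> 'a)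
                   \<Rightarrow> 'b set \<Rightarrow> ('b set \<Rightarrow> 'b) \<Rightarrow> ('q \<Rightarrow> 'b \<Rightarrow> 'b)
                   \<Rightarrow> (('a \<times> 'b) set \<times> ('a \<times> 'b) set) set" where
  "tgen Q C1 J1 R1 C2 J2 A2 =
     {({(J1 X, y)}, (\<Union>x\<in>X. {(x, y)})) | X y. X \<subseteq> C1 \<and> y \<in> C2}
   \<union> {({(x, J2 Y)}, (\<Union>y\<in>Y. {(x, y)})) | x Y. x \<in> C1 \<and> Y \<subseteq> C2}
   \<union> {({(R1 x a, y)}, {(x, A2 a y)}) | x a y. x \<in> C1 \<and> a \<in> Q \<and> y \<in> C2}"

inductive tcong :: "'x set \<Rightarrow> ('x set \<times> 'x set) set \<Rightarrow> 'x set \<Rightarrow> 'x set \<Rightarrow> bool"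
  for U G where
  refl: "X \<subseteq> U \<Longrightarrow> tcong U G X X"
| gen: "(X, Y) \<in> G \<Longrightarrow> tcong U G X Y"
| sym: "tcong U G X Y \<Longrightarrow> tcong U G Y X"
| trans: "tcong U G X Y \<Longrightarrow> tcong U G Y Z \<Longrightarrow> tcong U G X Z"
| union: "\<forall>p\<in>P. tcong U G (fst p) (snd p) \<Longrightarrow> tcong U G (\<Union>(fst ` P)) (\<Union>(snd ` P))"

definition tcls :: "'x set \<Rightarrow> ('x set \<times> 'x set) set \<Rightarrow> 'x set \<Rightarrow> 'x set set" where
  "tcls U G X = {Y. tcong U G X Y}"

definition tcarrier :: "'x set \<Rightarrow> ('x set \<times> 'x set) set \<Rightarrow> 'x set set set" where
  "tcarrier U G = Pow U // {(X, Y). tcong U G X Y}"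

definition tjoin :: "'x set \<Rightarrow> ('x set \<times> 'x set) set \<Rightarrow> 'x set set set \<Rightarrow> 'x set set" where
  "tjoin U G CC = tcls U G (\<Union>C\<in>CC. (SOME X. X \<in> C))"

definition tact1 :: "'a set \<Rightarrow> ('a \<times> 'b) set \<Rightarrow> (('a \<times> 'b) set \<times> ('a \<times> 'b) set) set \<Rightarrow> ('a \<Rightarrow> 'a)
                    \<Rightarrow> ('a \<times> 'b) set set \<Rightarrow> ('a \<times> 'b) set set" where
  "tact1 C1 U G f u = tcls U G ((\<lambda>(x, y). (f x, y)) ` (SOME X. X \<in> u))"

definition TU :: "('c \<Rightarrow> nat) \<Rightarrow> 'c set \<Rightarrow> 'c set \<Rightarrow> dkind \<Rightarrow> ('c delt set \<Rightarrow> 'c delt \<Rightarrow> bool)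
                  \<Rightarrow> ((nat \<Rightarrow> 'c fm) set \<times> 'c delt set) set" where
  "TU ar L L1 K der = Pow (Sig ar L1) \<times> Th ar L K der"

definition TG :: "('c \<Rightarrow> nat) \<Rightarrow> 'c set \<Rightarrow> 'c set \<Rightarrow> dkind \<Rightarrow> ('c delt set \<Rightarrow> 'c delt \<Rightarrow> bool)
                  \<Rightarrow> (((nat \<Rightarrow> 'c fm) set \<times> 'c delt set) set \<times> ((nat \<Rightarrow> 'c fm) set \<times> 'c delt set) set) set" where
  "TG ar L L1 K der =
     tgen (Pow (Sig ar L)) (Pow (Sig ar L1)) Union (\<lambda>x a. sprod x (iemb ar L1 a))
          (Th ar L K der) (ThJoin der) (ThAct der)"

definition Tcar where
  "Tcar ar L L1 K der = tcarrier (TU ar L L1 K der) (TG ar L L1 K der)"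

definition Tjoin where
  "Tjoin ar L L1 K der = tjoin (TU ar L L1 K der) (TG ar L L1 K der)"

definition Tact_i where
  "Tact_i ar L L1 K der a u =
     tact1 (Pow (Sig ar L1)) (TU ar L L1 K der) (TG ar L L1 K der) (\<lambda>x. sprod (iemb ar L1 a) x) u"

definition iso_to_submodule :: "'q set \<Rightarrow> 'm set \<Rightarrow> ('m set \<Rightarrow> 'm) \<Rightarrow> ('q \<Rightarrow> 'm \<Rightarrow> 'm)
                              \<Rightarrow> 'n set \<Rightarrow> ('n set \<Rightarrow> 'n) \<Rightarrow> ('q \<Rightarrow> 'n \<Rightarrow> 'n) \<Rightarrow> bool" where
  "iso_to_submodule Q C1 J1 A1 C2 J2 A2 \<longleftrightarrow>
    (\<exists>S f. S \<subseteq> C2 \<and> (\<forall>X\<subseteq>S. J2 X \<in> S) \<and> (\<forall>a\<in>Q. \<forall>u\<in>S. A2 a u \<in> S)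
         \<and> bij_betw f C1 S
         \<and> (\<forall>X\<subseteq>C1. f (J1 X) = J2 (f ` X))
         \<and> (\<forall>a\<in>Q. \<forall>u\<in>C1. f (A1 a u) = A2 a (f u)))"

end

theory Submission
  imports Defs
begin

text \<open>The map T \<mapsto> {id} \<otimes> T from Th to the tensor product preserves joins and the action
  by the defining relations of the tensor product, so its image is a submodule, and it only
  remains to see that it is injective. For this, map every L1-formula to an L-formula by
  replacing each maximal subformula headed by a new connective with a fixed L-formula. On
  substitutions this gives a homomorphism \<pi> of right \<wp>\<Sigma>_L-modules from \<wp>\<Sigma>_L1 to
  \<wp>\<Sigma>_L fixing {id}. Hence x \<otimes> T \<mapsto> \<pi>(x) \<cdot> T respects the defining relations, and the
  resulting map from the tensor product back to Th is a left inverse of T \<mapsto> {id} \<otimes> T.\<close>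

lemma subst_Var [simp]: "subst Var x = x"
  by (induction x) (auto intro: map_idI)

lemma subst_subst: "subst s (subst t x) = subst (scomp s t) x"
  by (induction x) (auto simp: scomp_def)

lemma app_Var [simp]: "app Var d = d"
  by (cases d) (auto intro: map_idI)

lemma app_app: "app s (app t d) = app (scomp s t) d"
  by (cases d) (auto simp: subst_subst)

lemma scomp_assoc: "scomp a (scomp b c) = scomp (scomp a b) c"
  by (auto simp: scomp_def subst_subst)

lemma subst_in_Fm: "s \<in> Sig ar L \<Longrightarrow> x \<in> Fm ar L \<Longrightarrow> subst s x \<in> Fm ar L"
  by (induction x) (auto simp: Fm_def Sig_def)

lemma app_in_Dom: "s \<in> Sig ar L \<Longrightarrow> d \<in> Dom ar L K \<Longrightarrow> app s d \<in> Dom ar L K"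
  by (cases K) (auto simp: subst_in_Fm subsetD)

lemma Var_in_Sig: "Var \<in> Sig ar L"
  by (simp add: Sig_def Fm_def)

lemma scomp_in_Sig: "s \<in> Sig ar L \<Longrightarrow> t \<in> Sig ar L \<Longrightarrow> scomp s t \<in> Sig ar L"
  by (simp add: Sig_def scomp_def subst_in_Fm)

lemma wf_fm_mono: "L \<subseteq> L1 \<Longrightarrow> wf_fm ar L x \<Longrightarrow> wf_fm ar L1 x"
  by (induction x) auto

lemma Sig_mono: "L \<subseteq> L1 \<Longrightarrow> Sig ar L \<subseteq> Sig ar L1"
  by (auto simp: Sig_def Fm_def intro: wf_fm_mono)

lemma iemb_eq: "iemb ar L1 A = A \<inter> Sig ar L1"
  unfolding iemb_def by (auto simp flip: fun_eq_iff)

lemma sprod_Var_left [simp]: "sprod {Var} A = A"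
  by (auto simp: sprod_def scomp_def)

lemma sprod_Var_right [simp]: "sprod A {Var} = A"
  by (auto simp: sprod_def scomp_def)

lemma sprod_assoc: "sprod a (sprod b c) = sprod (sprod a b) c"
  unfolding sprod_def by (auto simp: scomp_assoc) (metis scomp_assoc)+

lemma sprod_Union_right: "sprod a (\<Union>X) = \<Union>(sprod a ` X)"
  unfolding sprod_def by blast

lemma sprod_subset_Sig: "a \<subseteq> Sig ar L \<Longrightarrow> b \<subseteq> Sig ar L \<Longrightarrow> sprod a b \<subseteq> Sig ar L"
  unfolding sprod_def by (auto intro: scomp_in_Sig)

lemma sact_sact: "sact a (sact b Phi) = sact (sprod a b) Phi"
  unfolding sact_def sprod_def by (auto simp: app_app) (metis app_app)+

lemma sact_Union_left: "sact (\<Union>X) Phi = (\<Union>x\<in>X. sact x Phi)"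
  unfolding sact_def by blast

lemma sact_Union_right: "sact a (\<Union>Y) = (\<Union>y\<in>Y. sact a y)"
  unfolding sact_def by blast

lemma sact_Var [simp]: "sact {Var} Phi = Phi"
  unfolding sact_def by auto

lemma sact_mono: "Phi \<subseteq> Psi \<Longrightarrow> sact a Phi \<subseteq> sact a Psi"
  unfolding sact_def by blast

lemma sact_subset_Dom: "a \<subseteq> Sig ar L \<Longrightarrow> Phi \<subseteq> Dom ar L K \<Longrightarrow> sact a Phi \<subseteq> Dom ar L K"
  unfolding sact_def using app_in_Dom by blast

text \<open>Subformulas headed by a connective outside L are sent to Var 0; any fixed L-formula
  would do, as only restrict_fm_in_Fm and restrict_fm_subst are used.\<close>

fun restrict_fm :: "('c \<Rightarrow> nat) \<Rightarrow> 'c set \<Rightarrow> 'c fm \<Rightarrow> 'c fm" where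
  "restrict_fm ar L (Var v) = Var v"
| "restrict_fm ar L (Op c xs) =
     (if c \<in> L \<and> length xs = ar c then Op c (map (restrict_fm ar L) xs) else Var 0)"

lemma restrict_fm_in_Fm: "restrict_fm ar L x \<in> Fm ar L"
  by (induction x) (auto simp: Fm_def)

lemma restrict_fm_subst:
  "x \<in> Fm ar L \<Longrightarrow> restrict_fm ar L (subst w x) = subst (restrict_fm ar L \<circ> w) x"
  by (induction x) (auto simp: Fm_def)

definition restrict_sig :: "('c \<Rightarrow> nat) \<Rightarrow> 'c set \<Rightarrow> (nat \<Rightarrow> 'c fm) set \<Rightarrow> (nat \<Rightarrow> 'c fm) set" where
  "restrict_sig ar L A = (\<lambda>w. restrict_fm ar L \<circ> w) ` A"

lemma restrict_sig_subset_Sig: "restrict_sig ar L A \<subseteq> Sig ar L"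
  by (auto simp: restrict_sig_def Sig_def restrict_fm_in_Fm)

lemma restrict_sig_Var [simp]: "restrict_sig ar L {Var} = {Var}"
  by (auto simp: restrict_sig_def fun_eq_iff)

lemma restrict_sig_Union: "restrict_sig ar L (\<Union>X) = (\<Union>x\<in>X. restrict_sig ar L x)"
  by (auto simp: restrict_sig_def)

lemma restrict_sig_sprod:
  assumes "a \<subseteq> Sig ar L"
  shows "restrict_sig ar L (sprod x a) = sprod (restrict_sig ar L x) a"
proof -
  have "restrict_fm ar L \<circ> scomp w s = scomp (restrict_fm ar L \<circ> w) s" if "s \<in> a" for w s
    using assms that by (auto simp: scomp_def Sig_def restrict_fm_subst fun_eq_iff)
  then show ?thesis
    unfolding restrict_sig_def sprod_def by (auto simp: image_def) metis+
qed

lemma tcls_eq: "tcong U G X Y \<Longrightarrow> tcls U G X = tcls U G Y"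
  unfolding tcls_def by (auto intro: tcong.trans tcong.sym)

lemma tcls_self: "X \<subseteq> U \<Longrightarrow> X \<in> tcls U G X"
  unfolding tcls_def by (auto intro: tcong.refl)

lemma tcls_in_tcarrier: "X \<subseteq> U \<Longrightarrow> tcls U G X \<in> tcarrier U G"
  unfolding tcarrier_def tcls_def by (auto simp: quotient_def Image_def)

lemma tcong_some_tcls:
  assumes "X \<subseteq> U"
  shows "tcong U G X (SOME Z. Z \<in> tcls U G X)"
proof -
  have "(SOME Z. Z \<in> tcls U G X) \<in> tcls U G X"
    using tcls_self[OF assms] by (rule someI)
  then show ?thesis by (simp add: tcls_def)
qed

lemma tjoin_tcls:
  assumes "Xs \<subseteq> Pow U"
  shows "tjoin U G (tcls U G ` Xs) = tcls U G (\<Union>Xs)"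
proof -
  let ?P = "(\<lambda>X. (X, SOME Z. Z \<in> tcls U G X)) ` Xs"
  have "tcong U G (\<Union>(fst ` ?P)) (\<Union>(snd ` ?P))"
    using assms by (intro tcong.union) (auto intro: tcong_some_tcls)
  then have "tcong U G (\<Union>Xs) (\<Union>C\<in>tcls U G ` Xs. SOME Z. Z \<in> C)"
    by (simp add: image_image)
  then show ?thesis
    unfolding tjoin_def by (rule tcls_eq[symmetric])
qed

lemma tcong_image:
  assumes "F ` U \<subseteq> U" and "\<And>A B. (A, B) \<in> G \<Longrightarrow> (F ` A, F ` B) \<in> G"
  shows "tcong U G X Y \<Longrightarrow> tcong U G (F ` X) (F ` Y)"
proof (induction rule: tcong.induct)
  case (refl X)
  then show ?case using assms(1) by (blast intro: tcong.refl)
next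
  case (union P)
  let ?P = "(\<lambda>p. (F ` fst p, F ` snd p)) ` P"
  have "tcong U G (\<Union>(fst ` ?P)) (\<Union>(snd ` ?P))"
    using union by (intro tcong.union) auto
  then show ?case by (simp add: image_Union image_image)
qed (auto intro: assms(2) tcong.gen tcong.sym tcong.trans)

lemma tact1_tcls:
  assumes "F ` U \<subseteq> U" and "\<And>A B. (A, B) \<in> G \<Longrightarrow> (F ` A, F ` B) \<in> G"
    and "F = (\<lambda>(x, y). (f x, y))" and "X \<subseteq> U"
  shows "tact1 C1 U G f (tcls U G X) = tcls U G (F ` X)"
proof -
  have "tcong U G (F ` X) (F ` (SOME Z. Z \<in> tcls U G X))"
    using tcong_image[OF assms(1,2) tcong_some_tcls[OF assms(4)]] .
  then show ?thesis
    unfolding tact1_def assms(3) by (rule tcls_eq[symmetric])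
qed

lemma tcong_invariant:
  assumes "\<And>A B. (A, B) \<in> G \<Longrightarrow> H A = H B" and "\<And>S. H (\<Union>S) = J (H ` S)"
  shows "tcong U G X Y \<Longrightarrow> H X = H Y"
proof (induction rule: tcong.induct)
  case (union P)
  then have "H ` fst ` P = H ` snd ` P"
    by (force simp: image_image)
  then show ?case by (simp add: assms(2))
qed (auto intro: assms(1))

lemma tgenE:
  assumes "(A, B) \<in> tgen Q C1 J1 R1 C2 J2 A2"
  obtains (join_left) X y where "A = {(J1 X, y)}" "B = (\<Union>x\<in>X. {(x, y)})" "X \<subseteq> C1" "y \<in> C2"
  | (join_right) x Y where "A = {(x, J2 Y)}" "B = (\<Union>y\<in>Y. {(x, y)})" "x \<in> C1" "Y \<subseteq> C2"
  | (action) x a y where "A = {(R1 x a, y)}" "B = {(x, A2 a y)}" "x \<in> C1" "a \<in> Q" "y \<in> C2"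
  using assms unfolding tgen_def by auto

lemma tgen_join_leftI:
  "X \<subseteq> C1 \<Longrightarrow> y \<in> C2 \<Longrightarrow> ({(J1 X, y)}, \<Union>x\<in>X. {(x, y)}) \<in> tgen Q C1 J1 R1 C2 J2 A2"
  unfolding tgen_def by blast

lemma tgen_join_rightI:
  "x \<in> C1 \<Longrightarrow> Y \<subseteq> C2 \<Longrightarrow> ({(x, J2 Y)}, \<Union>y\<in>Y. {(x, y)}) \<in> tgen Q C1 J1 R1 C2 J2 A2"
  unfolding tgen_def by blast

lemma tgen_actionI:
  "x \<in> C1 \<Longrightarrow> a \<in> Q \<Longrightarrow> y \<in> C2 \<Longrightarrow> ({(R1 x a, y)}, {(x, A2 a y)}) \<in> tgen Q C1 J1 R1 C2 J2 A2"
  unfolding tgen_def by blast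

lemma tgen_image_first:
  assumes "f ` C1 \<subseteq> C1" and "\<And>X. X \<subseteq> C1 \<Longrightarrow> f (J1 X) = J1 (f ` X)"
    and "\<And>x a. x \<in> C1 \<Longrightarrow> a \<in> Q \<Longrightarrow> f (R1 x a) = R1 (f x) a"
    and "(A, B) \<in> tgen Q C1 J1 R1 C2 J2 A2"
  shows "((\<lambda>(x, y). (f x, y)) ` A, (\<lambda>(x, y). (f x, y)) ` B) \<in> tgen Q C1 J1 R1 C2 J2 A2"
  using assms(4)
proof (cases rule: tgenE)
  case (join_left X y)
  then have "({(J1 (f ` X), y)}, \<Union>x\<in>f ` X. {(x, y)}) \<in> tgen Q C1 J1 R1 C2 J2 A2"
    using assms(1) by (intro tgen_join_leftI) auto
  then show ?thesis using join_left assms(2) by (simp add: image_UN)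
next
  case (join_right x Y)
  then have "({(f x, J2 Y)}, \<Union>y\<in>Y. {(f x, y)}) \<in> tgen Q C1 J1 R1 C2 J2 A2"
    using assms(1) by (intro tgen_join_rightI) auto
  then show ?thesis using join_right by (simp add: image_UN)
next
  case (action x a y)
  then have "({(R1 (f x) a, y)}, {(f x, A2 a y)}) \<in> tgen Q C1 J1 R1 C2 J2 A2"
    using assms(1) by (intro tgen_actionI) auto
  then show ?thesis using action assms(3) by simp
qed

lemma iso_to_submoduleI:
  assumes "inj_on f C1" and "f ` C1 \<subseteq> C2"
    and "\<And>X. X \<subseteq> C1 \<Longrightarrow> J1 X \<in> C1" and "\<And>a u. a \<in> Q \<Longrightarrow> u \<in> C1 \<Longrightarrow> A1 a u \<in> C1"
    and "\<And>X. X \<subseteq> C1 \<Longrightarrow> f (J1 X) = J2 (f ` X)"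
    and "\<And>a u. a \<in> Q \<Longrightarrow> u \<in> C1 \<Longrightarrow> f (A1 a u) = A2 a (f u)"
  shows "iso_to_submodule Q C1 J1 A1 C2 J2 A2"
  unfolding iso_to_submodule_def
proof (intro exI[of _ "f ` C1"] exI[of _ f] conjI)
  show "\<forall>X\<subseteq>f ` C1. J2 X \<in> f ` C1"
  proof (intro allI impI)
    fix X assume "X \<subseteq> f ` C1"
    then obtain Y where Y: "Y \<subseteq> C1" and "X = f ` Y" by (auto simp: subset_image_iff)
    then have "J2 X = f (J1 Y)" using assms(5) by simp
    then show "J2 X \<in> f ` C1" using assms(3) Y by blast
  qed
  show "\<forall>a\<in>Q. \<forall>u\<in>f ` C1. A2 a u \<in> f ` C1"
    using assms(4,6) by force
  show "bij_betw f C1 (f ` C1)"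
    using assms(1) by (simp add: bij_betw_def)
qed (use assms(2,5,6) in blast)+

locale deductive_system =
  fixes ar :: "'c \<Rightarrow> nat" and L :: "'c set" and K :: dkind
    and der :: "'c delt set \<Rightarrow> 'c delt \<Rightarrow> bool"
  assumes conseq_rel: "conseq_rel ar L K der"
begin

lemma
  shows der_Dom: "der Phi psi \<Longrightarrow> Phi \<subseteq> Dom ar L K \<and> psi \<in> Dom ar L K"
    and der_refl: "Phi \<subseteq> Dom ar L K \<Longrightarrow> phi \<in> Phi \<Longrightarrow> der Phi phi"
    and der_mono: "der Phi phi \<Longrightarrow> Phi \<subseteq> Psi \<Longrightarrow> Psi \<subseteq> Dom ar L K \<Longrightarrow> der Psi phi"
    and der_cut: "Phi \<subseteq> Dom ar L K \<Longrightarrow> \<forall>psi\<in>Psi. der Phi psi \<Longrightarrow> der Psi chi \<Longrightarrow> der Phi chi"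
    and der_subst: "der Phi phi \<Longrightarrow> s \<in> Sig ar L \<Longrightarrow> der (app s ` Phi) (app s phi)"
  using conseq_rel unfolding conseq_rel_def by meson+

lemma gamma_subset_Dom: "gamma der A \<subseteq> Dom ar L K"
  unfolding gamma_def using der_Dom by blast

lemma gamma_extensive: "A \<subseteq> Dom ar L K \<Longrightarrow> A \<subseteq> gamma der A"
  unfolding gamma_def using der_refl by blast

lemma gamma_mono: "A \<subseteq> B \<Longrightarrow> B \<subseteq> Dom ar L K \<Longrightarrow> gamma der A \<subseteq> gamma der B"
  unfolding gamma_def using der_mono by blast

lemma gamma_cut: "A \<subseteq> Dom ar L K \<Longrightarrow> B \<subseteq> gamma der A \<Longrightarrow> gamma der B \<subseteq> gamma der A"
  unfolding gamma_def using der_cut by blast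

lemma gamma_structural: "s \<in> Sig ar L \<Longrightarrow> app s ` gamma der A \<subseteq> gamma der (app s ` A)"
  unfolding gamma_def using der_subst by blast

lemma gamma_eqI:
  assumes "A \<subseteq> Dom ar L K" and "A \<subseteq> B" and "B \<subseteq> gamma der A"
  shows "gamma der B = gamma der A"
proof
  show "gamma der B \<subseteq> gamma der A" using assms(1,3) by (rule gamma_cut)
  show "gamma der A \<subseteq> gamma der B"
    using assms(2) order_trans[OF assms(3) gamma_subset_Dom] by (rule gamma_mono)
qed

lemma gamma_idem:
  assumes "A \<subseteq> Dom ar L K"
  shows "gamma der (gamma der A) = gamma der A"
  using assms gamma_extensive[OF assms] by (rule gamma_eqI) simp

lemma gamma_UN_gamma:
  assumes "\<And>i. i \<in> I \<Longrightarrow> F i \<subseteq> Dom ar L K"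
  shows "gamma der (\<Union>i\<in>I. gamma der (F i)) = gamma der (\<Union>i\<in>I. F i)"
proof (rule gamma_eqI)
  show UN_Dom: "(\<Union>i\<in>I. F i) \<subseteq> Dom ar L K" using assms by blast
  show "(\<Union>i\<in>I. F i) \<subseteq> (\<Union>i\<in>I. gamma der (F i))"
    using assms by (intro UN_mono gamma_extensive) auto
  show "(\<Union>i\<in>I. gamma der (F i)) \<subseteq> gamma der (\<Union>i\<in>I. F i)"
  proof (rule UN_least)
    fix i assume "i \<in> I"
    then have "F i \<subseteq> (\<Union>i\<in>I. F i)" by blast
    then show "gamma der (F i) \<subseteq> gamma der (\<Union>i\<in>I. F i)"
      using UN_Dom by (rule gamma_mono)
  qed
qed

text \<open>Equivalent to the nucleus inequality a \<cdot> gamma B \<subseteq> gamma (a \<cdot> B); this is where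
  structurality of der enters.\<close>

lemma gamma_sact_gamma:
  assumes "a \<subseteq> Sig ar L" and "B \<subseteq> Dom ar L K"
  shows "gamma der (sact a (gamma der B)) = gamma der (sact a B)"
proof (rule gamma_eqI)
  show aB: "sact a B \<subseteq> Dom ar L K"
    using assms by (rule sact_subset_Dom)
  show "sact a B \<subseteq> sact a (gamma der B)"
    using assms(2) by (intro sact_mono gamma_extensive)
  have "app s ` gamma der B \<subseteq> gamma der (sact a B)" if "s \<in> a" for s
  proof -
    have "app s ` B \<subseteq> sact a B" using that unfolding sact_def by blast
    then have "gamma der (app s ` B) \<subseteq> gamma der (sact a B)"
      using aB by (rule gamma_mono)
    then show ?thesis using gamma_structural that assms(1) by blast
  qed
  then show "sact a (gamma der B) \<subseteq> gamma der (sact a B)"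
    unfolding sact_def by blast
qed

lemma Th_subset_Dom: "T \<in> Th ar L K der \<Longrightarrow> T \<subseteq> Dom ar L K"
  by (simp add: Th_def)

lemma gamma_in_Th: "A \<subseteq> Dom ar L K \<Longrightarrow> gamma der A \<in> Th ar L K der"
  by (simp add: Th_def gamma_subset_Dom gamma_idem)

lemma ThJoin_in_Th: "Y \<subseteq> Th ar L K der \<Longrightarrow> ThJoin der Y \<in> Th ar L K der"
  unfolding ThJoin_def by (rule gamma_in_Th) (auto simp: Th_def)

lemma ThAct_in_Th: "a \<subseteq> Sig ar L \<Longrightarrow> T \<in> Th ar L K der \<Longrightarrow> ThAct der a T \<in> Th ar L K der"
  unfolding ThAct_def by (intro gamma_in_Th sact_subset_Dom Th_subset_Dom)

lemma ThJoin_singleton: "T \<in> Th ar L K der \<Longrightarrow> ThJoin der {T} = T"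
  by (simp add: ThJoin_def Th_def)

lemma ThAct_Var: "T \<in> Th ar L K der \<Longrightarrow> ThAct der {Var} T = T"
  by (simp add: ThAct_def Th_def)

lemma ThAct_subset_Dom: "ThAct der a T \<subseteq> Dom ar L K"
  unfolding ThAct_def by (rule gamma_subset_Dom)

lemma ThJoin_Union:
  assumes "\<And>X. X \<in> S \<Longrightarrow> \<Union>X \<subseteq> Dom ar L K"
  shows "ThJoin der (\<Union>S) = ThJoin der (ThJoin der ` S)"
proof -
  have "gamma der (\<Union>X\<in>S. gamma der (\<Union>X)) = gamma der (\<Union>X\<in>S. \<Union>X)"
    using assms by (rule gamma_UN_gamma)
  moreover have "\<Union>(\<Union>S) = (\<Union>X\<in>S. \<Union>X)" by blast
  ultimately show ?thesis by (simp add: ThJoin_def image_image)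
qed

lemma ThAct_Union_left:
  assumes "A \<subseteq> Pow (Sig ar L)" and "T \<subseteq> Dom ar L K"
  shows "ThAct der (\<Union>A) T = ThJoin der ((\<lambda>a. ThAct der a T) ` A)"
proof -
  have "\<And>a. a \<in> A \<Longrightarrow> sact a T \<subseteq> Dom ar L K"
    using assms by (intro sact_subset_Dom) auto
  then have "gamma der (\<Union>a\<in>A. gamma der (sact a T)) = gamma der (\<Union>a\<in>A. sact a T)"
    by (rule gamma_UN_gamma)
  then show ?thesis by (simp add: ThAct_def ThJoin_def sact_Union_left)
qed

lemma ThAct_ThJoin:
  assumes "a \<subseteq> Sig ar L" and "Y \<subseteq> Th ar L K der"
  shows "ThAct der a (ThJoin der Y) = ThJoin der (ThAct der a ` Y)"
proof -
  have "\<Union>Y \<subseteq> Dom ar L K" using assms(2) by (auto simp: Th_def)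
  then have "ThAct der a (ThJoin der Y) = gamma der (\<Union>y\<in>Y. sact a y)"
    by (simp add: ThAct_def ThJoin_def gamma_sact_gamma assms(1) sact_Union_right)
  also have "\<dots> = gamma der (\<Union>y\<in>Y. gamma der (sact a y))"
  proof (rule gamma_UN_gamma[symmetric])
    show "y \<in> Y \<Longrightarrow> sact a y \<subseteq> Dom ar L K" for y
      using assms by (intro sact_subset_Dom Th_subset_Dom) auto
  qed
  finally show ?thesis by (simp add: ThAct_def ThJoin_def image_image)
qed

lemma ThAct_sprod:
  assumes "a \<subseteq> Sig ar L" and "b \<subseteq> Sig ar L" and "T \<subseteq> Dom ar L K"
  shows "ThAct der (sprod a b) T = ThAct der a (ThAct der b T)"
  using assms by (simp add: ThAct_def sact_sact[symmetric] gamma_sact_gamma sact_subset_Dom)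

end

locale language_expansion = deductive_system +
  fixes L1 :: "'c set"
  assumes expansion: "expansion L L1"
begin

lemma iemb_of_subset_Sig: "a \<subseteq> Sig ar L \<Longrightarrow> iemb ar L1 a = a"
  using Sig_mono[of L L1 ar] expansion by (auto simp: iemb_eq expansion_def)

definition tensor_to_Th :: "((nat \<Rightarrow> 'c fm) set \<times> 'c delt set) set \<Rightarrow> 'c delt set" where
  "tensor_to_Th X = ThJoin der ((\<lambda>(x, T). ThAct der (restrict_sig ar L x) T) ` X)"

lemma tensor_to_Th_Union: "tensor_to_Th (\<Union>S) = ThJoin der (tensor_to_Th ` S)"
proof -
  let ?h = "\<lambda>(x, T). ThAct der (restrict_sig ar L x) T"
  have "tensor_to_Th (\<Union>S) = ThJoin der (\<Union>X\<in>S. ?h ` X)"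
    by (simp add: tensor_to_Th_def image_Union)
  also have "\<dots> = ThJoin der (ThJoin der ` (\<lambda>X. ?h ` X) ` S)"
    by (rule ThJoin_Union) (auto simp: ThAct_subset_Dom[THEN subsetD])
  finally show ?thesis by (simp add: tensor_to_Th_def image_image)
qed

lemma tensor_to_Th_singleton:
  "T \<in> Th ar L K der \<Longrightarrow> tensor_to_Th {(x, T)} = ThAct der (restrict_sig ar L x) T"
  by (simp add: tensor_to_Th_def ThJoin_singleton ThAct_in_Th restrict_sig_subset_Sig)

lemma tensor_to_Th_TG:
  assumes "(A, B) \<in> TG ar L L1 K der"
  shows "tensor_to_Th A = tensor_to_Th B"
  using assms unfolding TG_def
proof (cases rule: tgenE)
  case (join_left X y)
  let ?\<pi> = "restrict_sig ar L"
  have "tensor_to_Th A = ThAct der (\<Union>(?\<pi> ` X)) y"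
    using join_left by (simp add: tensor_to_Th_singleton restrict_sig_Union)
  also have "\<dots> = ThJoin der ((\<lambda>a. ThAct der a y) ` ?\<pi> ` X)"
    using restrict_sig_subset_Sig Th_subset_Dom[OF join_left(4)]
    by (intro ThAct_Union_left) blast+
  also have "\<dots> = tensor_to_Th B"
    using join_left by (simp add: tensor_to_Th_def image_UN image_image UNION_singleton_eq_range)
  finally show ?thesis .
next
  case (join_right x Y)
  let ?\<pi> = "restrict_sig ar L"
  have "tensor_to_Th A = ThAct der (?\<pi> x) (ThJoin der Y)"
    using join_right by (simp add: tensor_to_Th_singleton ThJoin_in_Th)
  also have "\<dots> = ThJoin der (ThAct der (?\<pi> x) ` Y)"
    using join_right by (simp add: ThAct_ThJoin restrict_sig_subset_Sig)
  also have "\<dots> = tensor_to_Th B"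
    using join_right by (simp add: tensor_to_Th_def image_UN UNION_singleton_eq_range image_image)
  finally show ?thesis .
next
  case (action x a y)
  then show ?thesis
    by (simp add: tensor_to_Th_singleton ThAct_in_Th iemb_of_subset_Sig restrict_sig_sprod
        ThAct_sprod restrict_sig_subset_Sig Th_subset_Dom)
qed

lemma tensor_to_Th_tcong: "tcong U (TG ar L L1 K der) X Y \<Longrightarrow> tensor_to_Th X = tensor_to_Th Y"
  by (rule tcong_invariant[where H = tensor_to_Th and J = "ThJoin der", OF tensor_to_Th_TG
        tensor_to_Th_Union])

abbreviation "tensor_cong \<equiv> tcong (TU ar L L1 K der) (TG ar L L1 K der)"
abbreviation "tensor_cls \<equiv> tcls (TU ar L L1 K der) (TG ar L L1 K der)"

definition one_tensor :: "'c delt set \<Rightarrow> ((nat \<Rightarrow> 'c fm) set \<times> 'c delt set) set set" where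
  "one_tensor T = tensor_cls {({Var}, T)}"

lemma unit_pair_subset_TU: "T \<in> Th ar L K der \<Longrightarrow> {({Var}, T)} \<subseteq> TU ar L L1 K der"
  by (simp add: TU_def Var_in_Sig)

lemma one_tensor_in_Tcar: "T \<in> Th ar L K der \<Longrightarrow> one_tensor T \<in> Tcar ar L L1 K der"
  unfolding one_tensor_def Tcar_def by (intro tcls_in_tcarrier unit_pair_subset_TU)

lemma inj_on_one_tensor: "inj_on one_tensor (Th ar L K der)"
proof (rule inj_onI)
  fix S T assume S: "S \<in> Th ar L K der" and T: "T \<in> Th ar L K der"
    and eq: "one_tensor S = one_tensor T"
  have "{({Var}, T)} \<in> one_tensor T"
    unfolding one_tensor_def using T by (intro tcls_self unit_pair_subset_TU)
  then have "{({Var}, T)} \<in> one_tensor S"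
    by (simp add: eq)
  then have "tensor_cong {({Var}, S)} {({Var}, T)}"
    by (simp add: one_tensor_def tcls_def)
  then have "tensor_to_Th {({Var}, S)} = tensor_to_Th {({Var}, T)}"
    by (rule tensor_to_Th_tcong)
  then show "S = T"
    using S T by (simp add: tensor_to_Th_singleton ThAct_Var)
qed

lemma one_tensor_ThJoin:
  assumes "Y \<subseteq> Th ar L K der"
  shows "Tjoin ar L L1 K der (one_tensor ` Y) = one_tensor (ThJoin der Y)"
proof -
  have "({({Var}, ThJoin der Y)}, \<Union>T\<in>Y. {({Var}, T)}) \<in> TG ar L L1 K der"
    unfolding TG_def using assms Var_in_Sig by (intro tgen_join_rightI) auto
  then have "tensor_cong {({Var}, ThJoin der Y)} (\<Union>T\<in>Y. {({Var}, T)})"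
    by (rule tcong.gen)
  then have "tensor_cls (\<Union>T\<in>Y. {({Var}, T)}) = one_tensor (ThJoin der Y)"
    unfolding one_tensor_def by (rule tcls_eq[symmetric])
  moreover have "(\<lambda>T. {({Var}, T)}) ` Y \<subseteq> Pow (TU ar L L1 K der)"
    using assms unit_pair_subset_TU by blast
  then have "Tjoin ar L L1 K der (one_tensor ` Y) = tensor_cls (\<Union>T\<in>Y. {({Var}, T)})"
    unfolding Tjoin_def by (simp add: tjoin_tcls[symmetric] image_image one_tensor_def)
  ultimately show ?thesis by simp
qed

lemma one_tensor_ThAct:
  assumes "a \<subseteq> Sig ar L" and "T \<in> Th ar L K der"
  shows "Tact_i ar L L1 K der a (one_tensor T) = one_tensor (ThAct der a T)"
proof -
  let ?a = "iemb ar L1 a"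
  let ?F = "\<lambda>(x, y). (sprod ?a x, y)"
  have closed: "sprod ?a x \<subseteq> Sig ar L1" if "x \<subseteq> Sig ar L1" for x
    using that by (intro sprod_subset_Sig) (auto simp: iemb_eq)
  then have "?F ` TU ar L L1 K der \<subseteq> TU ar L L1 K der"
    by (auto simp: TU_def)
  moreover have "(?F ` A, ?F ` B) \<in> TG ar L L1 K der" if "(A, B) \<in> TG ar L L1 K der" for A B
    using that closed unfolding TG_def
    by (intro tgen_image_first) (auto simp: sprod_Union_right sprod_assoc)
  ultimately have "Tact_i ar L L1 K der a (one_tensor T) = tensor_cls {(?a, T)}"
    unfolding Tact_i_def one_tensor_def
    using unit_pair_subset_TU[OF assms(2)] by (subst tact1_tcls[where F = ?F]) auto
  also have "\<dots> = one_tensor (ThAct der a T)"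
  proof -
    have "({(sprod {Var} ?a, T)}, {({Var}, ThAct der a T)}) \<in> TG ar L L1 K der"
      unfolding TG_def using assms Var_in_Sig by (intro tgen_actionI) auto
    then show ?thesis
      unfolding one_tensor_def by (simp add: tcls_eq tcong.gen)
  qed
  finally show ?thesis .
qed

end

theorem theorem3p3:
  fixes ar :: "'c \<Rightarrow> nat" and L L1 :: "'c set" and K :: dkind
    and der :: "'c delt set \<Rightarrow> 'c delt \<Rightarrow> bool"
  assumes "expansion L L1"
    and "conseq_rel ar L K der"
  shows "iso_to_submodule (Pow (Sig ar L))
           (Th ar L K der) (ThJoin der) (ThAct der)
           (Tcar ar L L1 K der) (Tjoin ar L L1 K der) (Tact_i ar L L1 K der)"
proof -
  interpret language_expansion ar L K der L1
    using assms by unfold_locales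
  show ?thesis
    by (rule iso_to_submoduleI[where f = one_tensor])
      (auto simp: inj_on_one_tensor one_tensor_in_Tcar ThJoin_in_Th ThAct_in_Th
        one_tensor_ThJoin one_tensor_ThAct)
qed

end
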